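(* Let $\Gamma$ be a Shilla distance-regular graph with $b(\Gamma)=b$. Then: (i) $c_2$ divides $(b-1)a_3b_2$; (ii) $c_2$ divides $(b-1)ba_3(a_3+1)$; (iii) $c_2$ divides $b(a_3+1)b_2$; (iv) $c_2$ divides $(b+a_3)b_2$, and $(b+a_3)b_2\geq (1+a_3)c_2$, with equality if and only if $p^3_{33}=0$; (v) $c_2$ divides $(b-1)bb_2$.
   Context: A connected graph $\Gamma$ of diameter $D$ is distance-regular if there are integers $b_i,c_i$ ($0\le i\le D$) such that for any two vertices $x,y$ at distance $i$, exactly $c_i$ neighbours of $y$ are at distance $i-1$ from $x$ and exactly $b_i$ neighbours of $y$ are at distance $i+1$ from $x$. Then $\Gamma$ is regular of valency $k=b_0$, and $a_i:=k-b_i-c_i$. For vertices $x,y$ at distance $i$, $p^i_{jl}$ denotes the number of vertices $z$ with $d(x,z)=j$ and $d(y,z)=l$ (independent of the choice of $x,y$). The eigenvalues of $\Gamma$ are those of its adjacency matrix; $\Gamma$ has exactly $D+1$ distinct eigenvalues $k=\theta_0>\theta_1>\dots>\theta_D$. A Shilla distance-regular graph is a distance-regular graph of diameter $3$ whose second largest eigenvalue satisfies $\theta_1=a_3$. For such graphs $k=(a_3-a_1)a_3$, and one defines $b(\Gamma):=a_3-a_1=k/a_3$. *)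

theory Defs
  imports Complex_Main
begin

definition simple_graph :: "'a set \<Rightarrow> ('a \<Rightarrow> 'a \<Rightarrow> bool) \<Rightarrow> bool" where
  "simple_graph V E \<longleftrightarrow> finite V \<and> V \<noteq> {} \<and>
     (\<forall>x y. E x y \<longrightarrow> x \<in> V \<and> y \<in> V) \<and>
     (\<forall>x y. E x y \<longrightarrow> E y x) \<and> (\<forall>x. \<not> E x x)"

definition gdist :: "('a \<Rightarrow> 'a \<Rightarrow> bool) \<Rightarrow> 'a \<Rightarrow> 'a \<Rightarrow> nat" where
  "gdist E x y = (LEAST n. (E ^^ n) x y)"

definition connected_graph :: "'a set \<Rightarrow> ('a \<Rightarrow> 'a \<Rightarrow> bool) \<Rightarrow> bool" where
  "connected_graph V E \<longleftrightarrow> simple_graph V E \<and> (\<forall>x\<in>V. \<forall>y\<in>V. \<exists>n. (E ^^ n) x y)"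

definition diameter :: "'a set \<Rightarrow> ('a \<Rightarrow> 'a \<Rightarrow> bool) \<Rightarrow> nat" where
  "diameter V E = Max {gdist E x y | x y. x \<in> V \<and> y \<in> V}"

definition distance_regular ::
  "'a set \<Rightarrow> ('a \<Rightarrow> 'a \<Rightarrow> bool) \<Rightarrow> nat \<Rightarrow> (nat \<Rightarrow> nat) \<Rightarrow> (nat \<Rightarrow> nat) \<Rightarrow> bool" where
  "distance_regular V E D b c \<longleftrightarrow> connected_graph V E \<and> diameter V E = D \<and>
     (\<forall>i \<le> D. \<forall>x\<in>V. \<forall>y\<in>V. gdist E x y = i \<longrightarrow>
        card {z\<in>V. E y z \<and> gdist E x z + 1 = i} = c i \<and>
        card {z\<in>V. E y z \<and> gdist E x z = i + 1} = b i)"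

definition a_num :: "(nat \<Rightarrow> nat) \<Rightarrow> (nat \<Rightarrow> nat) \<Rightarrow> nat \<Rightarrow> int" where
  "a_num b c i = int (b 0) - int (b i) - int (c i)"

text \<open>p^h_{jl} for a pair x, y (the graph being distance-regular, it depends only on d(x,y)).\<close>
definition p_num :: "'a set \<Rightarrow> ('a \<Rightarrow> 'a \<Rightarrow> bool) \<Rightarrow> 'a \<Rightarrow> 'a \<Rightarrow> nat \<Rightarrow> nat \<Rightarrow> nat" where
  "p_num V E x y j l = card {z\<in>V. gdist E x z = j \<and> gdist E y z = l}"

definition is_eigenvalue :: "'a set \<Rightarrow> ('a \<Rightarrow> 'a \<Rightarrow> bool) \<Rightarrow> real \<Rightarrow> bool" where
  "is_eigenvalue V E \<theta> \<longleftrightarrow> (\<exists>f :: 'a \<Rightarrow> real. (\<exists>x\<in>V. f x \<noteq> 0) \<and>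
     (\<forall>x\<in>V. (\<Sum>y\<in>{y\<in>V. E x y}. f y) = \<theta> * f x))"

definition eigenvalues :: "'a set \<Rightarrow> ('a \<Rightarrow> 'a \<Rightarrow> bool) \<Rightarrow> real set" where
  "eigenvalues V E = {\<theta>. is_eigenvalue V E \<theta>}"

definition second_eigenvalue :: "'a set \<Rightarrow> ('a \<Rightarrow> 'a \<Rightarrow> bool) \<Rightarrow> real" where
  "second_eigenvalue V E = Max (eigenvalues V E - {Max (eigenvalues V E)})"

definition shilla :: "'a set \<Rightarrow> ('a \<Rightarrow> 'a \<Rightarrow> bool) \<Rightarrow> (nat \<Rightarrow> nat) \<Rightarrow> (nat \<Rightarrow> nat) \<Rightarrow> bool" where
  "shilla V E b c \<longleftrightarrow> distance_regular V E 3 b c \<and>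
     second_eigenvalue V E = of_int (a_num b c 3)"

end

theory Submission
  imports Defs "HOL-Computational_Algebra.Polynomial" "HOL-Real_Asymp.Real_Asymp"
begin

text \<open>Summing an eigenvector over the spheres around a vertex shows that the eigenvalues of a
  distance-regular graph of diameter 3 are exactly the roots of the characteristic polynomial of its
  tridiagonal intersection matrix. That quartic has a negative root, so there are at least two
  eigenvalues, \<open>\<theta>\<^sub>1\<close> is one of them, and evaluating the quartic at \<open>\<theta>\<^sub>1 = a\<^sub>3\<close> gives
  \<open>k = (a\<^sub>3 - a\<^sub>1) a\<^sub>3 = b a\<^sub>3\<close>, hence \<open>c\<^sub>3 = (b - 1) a\<^sub>3\<close> and \<open>b\<^sub>1 = (b - 1)(a\<^sub>3 + 1)\<close>.

  Now fix \<open>x, y\<close> at distance 3 and count: \<open>c\<^sub>2 k\<^sub>2 = k b\<^sub>1\<close>, \<open>c\<^sub>3 k\<^sub>3 = k\<^sub>2 b\<^sub>2\<close>,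
  \<open>c\<^sub>2 p\<^sup>3\<^sub>2\<^sub>2 = c\<^sub>3 (a\<^sub>2 + a\<^sub>3 - a\<^sub>1)\<close> (double counting edges between the neighbours of \<open>y\<close>
  and the sphere of radius 2 around \<open>x\<close>), \<open>k\<^sub>3 = 1 + a\<^sub>3 + p\<^sup>3\<^sub>3\<^sub>2 + p\<^sup>3\<^sub>3\<^sub>3\<close> and
  \<open>k\<^sub>2 = c\<^sub>3 + p\<^sup>3\<^sub>2\<^sub>2 + p\<^sup>3\<^sub>3\<^sub>2\<close>. Substituting the above expresses \<open>c\<^sub>2 k\<^sub>2\<close>, \<open>c\<^sub>2 k\<^sub>3\<close>,
  \<open>c\<^sub>2 p\<^sup>3\<^sub>3\<^sub>2\<close> and \<open>c\<^sub>2 (p\<^sup>3\<^sub>3\<^sub>3 + 1 + a\<^sub>3)\<close> as the products in (ii), (iii), (i) and (iv);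
  (v) is \<open>(b - 1)\<close> times (iv) minus (i).\<close>

lemma sum_atMost_3: "(\<Sum>j\<le>3::nat. g j) = g 0 + g 1 + g 2 + (g 3 :: 'b::comm_monoid_add)"
  by (simp add: eval_nat_numeral ac_simps)

lemma Max_remove_Max_in:
  assumes "finite S" "x \<in> S" "y \<in> S" "x \<noteq> y"
  shows "Max (S - {Max S}) \<in> S"
proof -
  have "S - {Max S} \<noteq> {}" using assms(2-4) by blast
  then show ?thesis using Max_in[of "S - {Max S}"] assms(1) by blast
qed

lemma poly_root_below:
  fixes p :: "real poly"
  assumes "eventually (\<lambda>t. 0 < poly p t) at_bot" "poly p s < 0"
  obtains r where "r < s" "poly p r = 0"
proof -
  obtain N where N: "\<And>t. t \<le> N \<Longrightarrow> 0 < poly p t"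
    using assms(1) unfolding eventually_at_bot_linorder by blast
  have "min N (s - 1) < s" "0 < poly p (min N (s - 1))" using N by auto
  then show ?thesis using poly_IVT_neg[of "min N (s - 1)" s p] assms(2) that by force
qed

lemma quadratic_eventually_pos:
  fixes a k :: real
  shows "eventually (\<lambda>t. 0 < t\<^sup>2 - a * t - k) at_bot"
  by real_asymp

lemma quartic_eventually_pos:
  fixes a\<^sub>1 a\<^sub>2 a\<^sub>3 k e f :: real
  shows "eventually (\<lambda>t. 0 < (t - a\<^sub>3) * ((t - a\<^sub>2) * (t\<^sup>2 - a\<^sub>1 * t - k) - e * t)
    - f * (t\<^sup>2 - a\<^sub>1 * t - k)) at_bot"
  by real_asymp

section \<open>Distances in a finite connected graph\<close>

locale finite_connected_graph =
  fixes V :: "'a set" and E :: "'a \<Rightarrow> 'a \<Rightarrow> bool"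
  assumes connected: "connected_graph V E"
begin

abbreviation d :: "'a \<Rightarrow> 'a \<Rightarrow> nat" where "d \<equiv> gdist E"

lemma finite_V: "finite V"
  and V_nonempty: "V \<noteq> {}"
  and adj_in_V: "E x y \<Longrightarrow> x \<in> V \<and> y \<in> V"
  and adj_sym: "E x y \<Longrightarrow> E y x"
  and adj_irrefl: "\<not> E x x"
  using connected unfolding connected_graph_def simple_graph_def by auto

lemma walk_sym: "(E ^^ n) x y \<Longrightarrow> (E ^^ n) y x"
proof (induction n arbitrary: y)
  case (Suc n)
  then obtain u where "(E ^^ n) x u" "E u y" by (meson relpowp_Suc_E)
  then show ?case using Suc.IH adj_sym by (meson relpowp_Suc_I2)
qed simp

lemma walk_end_in_V: "(E ^^ n) x y \<Longrightarrow> x \<in> V \<Longrightarrow> y \<in> V"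
  by (cases n) (auto elim: relpowp_Suc_E dest: adj_in_V)

lemma gdist_sym: "d x y = d y x"
  unfolding gdist_def using walk_sym by metis

lemma gdist_walk: "x \<in> V \<Longrightarrow> y \<in> V \<Longrightarrow> (E ^^ d x y) x y"
  using connected unfolding connected_graph_def gdist_def by (metis LeastI_ex)

lemma gdist_le_walk: "(E ^^ n) x y \<Longrightarrow> d x y \<le> n"
  unfolding gdist_def by (rule Least_le)

lemma gdist_self [simp]: "d x x = 0"
  using gdist_le_walk[of 0 x x] by simp

lemma gdist_eq_0_iff: "x \<in> V \<Longrightarrow> y \<in> V \<Longrightarrow> d x y = 0 \<longleftrightarrow> x = y"
  using gdist_walk[of x y] by auto

lemma gdist_eq_1_iff:
  assumes "x \<in> V" "y \<in> V"
  shows "d x y = 1 \<longleftrightarrow> E x y"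
proof
  assume "d x y = 1"
  then show "E x y" using gdist_walk[OF assms] by (metis One_nat_def relpowp_Suc_0)
next
  assume "E x y"
  then have "d x y \<le> 1" using gdist_le_walk[of 1 x y] by (metis One_nat_def relpowp_Suc_0)
  moreover have "x \<noteq> y" using \<open>E x y\<close> adj_irrefl by blast
  ultimately show "d x y = 1" using gdist_eq_0_iff[OF assms] by linarith
qed

lemma gdist_triangle: "x \<in> V \<Longrightarrow> y \<in> V \<Longrightarrow> z \<in> V \<Longrightarrow> d x z \<le> d x y + d y z"
  using gdist_le_walk relpowp_trans gdist_walk by metis

lemma gdist_adj:
  assumes "x \<in> V" "E y z"
  shows "d x z \<le> d x y + 1" and "d x y \<le> d x z + 1"
proof -
  have "y \<in> V" "z \<in> V" "d y z = 1" "d z y = 1"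
    using assms(2) adj_in_V gdist_eq_1_iff adj_sym by blast+
  then show "d x z \<le> d x y + 1" "d x y \<le> d x z + 1"
    using gdist_triangle assms(1) by metis+
qed

lemma geodesic_vertex:
  assumes "x \<in> V" "y \<in> V" "i \<le> d x y"
  obtains v where "v \<in> V" "d x v = i" "d v y = d x y - i"
proof -
  have "(E ^^ (i + (d x y - i))) x y" using gdist_walk[OF assms(1,2)] assms(3) by simp
  then obtain v where xv: "(E ^^ i) x v" and vy: "(E ^^ (d x y - i)) v y"
    unfolding relpowp_add by blast
  have v: "v \<in> V" using walk_end_in_V[OF xv assms(1)] .
  have "d x v \<le> i" "d v y \<le> d x y - i" using xv vy gdist_le_walk by blast+
  moreover have "d x y \<le> d x v + d v y" using gdist_triangle assms v by blast
  ultimately show ?thesis using that[OF v] assms(3) by linarith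
qed

lemma closer_neighbour:
  assumes "x \<in> V" "v \<in> V" "0 < d x v"
  obtains u where "u \<in> V" "E v u" "d x u + 1 = d x v"
proof -
  obtain u where u: "u \<in> V" "d x u = d x v - 1" "d u v = 1"
    using geodesic_vertex[OF assms(1,2), of "d x v - 1"] assms(3) by auto
  then show ?thesis using that gdist_eq_1_iff[OF u(1) assms(2)] adj_sym assms(3) by auto
qed

lemma card_Collect_pos: "z \<in> V \<Longrightarrow> P z \<Longrightarrow> 0 < card {z\<in>V. P z}"
  using finite_V by (auto simp: card_gt_0_iff)

lemma sum_card_adj_swap:
  "(\<Sum>z\<in>{z\<in>V. P z}. card {w\<in>V. E z w \<and> Q w}) = (\<Sum>w\<in>{w\<in>V. Q w}. card {z\<in>V. E w z \<and> P z})"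
proof -
  have "(\<Sum>z\<in>{z\<in>V. P z}. card {w\<in>V. E z w \<and> Q w})
      = card (SIGMA z:{z\<in>V. P z}. {w\<in>V. E z w \<and> Q w})"
    using finite_V by simp
  also have "\<dots> = card (prod.swap ` (SIGMA z:{z\<in>V. P z}. {w\<in>V. E z w \<and> Q w}))"
    by (simp add: card_image)
  also have "prod.swap ` (SIGMA z:{z\<in>V. P z}. {w\<in>V. E z w \<and> Q w})
      = (SIGMA w:{w\<in>V. Q w}. {z\<in>V. E w z \<and> P z})"
    using adj_sym by auto
  also have "card \<dots> = (\<Sum>w\<in>{w\<in>V. Q w}. card {z\<in>V. E w z \<and> P z})"
    using finite_V by simp
  finally show ?thesis .
qed

end

section \<open>Distance-regular graphs\<close>

text \<open>\<open>intersection_number b c j i\<close> is \<open>p\<^sup>j\<^sub>1\<^sub>i\<close>: for \<open>d(x, w) = j\<close>, the number of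
  neighbours of \<open>w\<close> at distance \<open>i\<close> from \<open>x\<close>.\<close>

definition intersection_number :: "(nat \<Rightarrow> nat) \<Rightarrow> (nat \<Rightarrow> nat) \<Rightarrow> nat \<Rightarrow> nat \<Rightarrow> int" where
  "intersection_number b c j i =
     (if i + 1 = j then int (c j) else if i = j then a_num b c j
      else if i = j + 1 then int (b j) else 0)"

locale distance_regular_graph =
  fixes V :: "'a set" and E :: "'a \<Rightarrow> 'a \<Rightarrow> bool" and D :: nat and b c :: "nat \<Rightarrow> nat"
  assumes distance_regular: "distance_regular V E D b c"

sublocale distance_regular_graph \<subseteq> finite_connected_graph
  using distance_regular by unfold_locales (simp add: distance_regular_def)

context distance_regular_graph
begin

abbreviation a :: "nat \<Rightarrow> int" where "a \<equiv> a_num b c"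

abbreviation p1 :: "nat \<Rightarrow> nat \<Rightarrow> int" where "p1 \<equiv> intersection_number b c"

abbreviation sphere :: "'a \<Rightarrow> nat \<Rightarrow> 'a set" where "sphere x i \<equiv> {z\<in>V. d x z = i}"

lemma diameter_eq_Max: "D = Max ((\<lambda>(x, y). d x y) ` (V \<times> V))"
proof -
  have "{d x y | x y. x \<in> V \<and> y \<in> V} = (\<lambda>(x, y). d x y) ` (V \<times> V)" by auto
  then show ?thesis using distance_regular unfolding distance_regular_def diameter_def by simp
qed

lemma gdist_le_diameter: "x \<in> V \<Longrightarrow> y \<in> V \<Longrightarrow> d x y \<le> D"
  unfolding diameter_eq_Max using finite_V by (auto intro: Max_ge)

lemma diameter_attained:
  obtains x y where "x \<in> V" "y \<in> V" "d x y = D"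
proof -
  have "D \<in> (\<lambda>(x, y). d x y) ` (V \<times> V)"
    unfolding diameter_eq_Max using finite_V V_nonempty by (intro Max_in) auto
  then show ?thesis using that by auto
qed

lemma exists_pair_at_distance:
  assumes "i \<le> D"
  obtains x v where "x \<in> V" "v \<in> V" "d x v = i"
proof -
  obtain x y where "x \<in> V" "y \<in> V" "d x y = D" by (rule diameter_attained)
  then show ?thesis using geodesic_vertex assms that by metis
qed

lemma card_closer_neighbours:
  "x \<in> V \<Longrightarrow> y \<in> V \<Longrightarrow> card {z\<in>V. E y z \<and> d x z + 1 = d x y} = c (d x y)"
  using distance_regular gdist_le_diameter unfolding distance_regular_def by blast

lemma card_farther_neighbours:
  "x \<in> V \<Longrightarrow> y \<in> V \<Longrightarrow> card {z\<in>V. E y z \<and> d x z = d x y + 1} = b (d x y)"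
  using distance_regular gdist_le_diameter unfolding distance_regular_def by blast

lemma valency:
  assumes "y \<in> V" shows "card {z\<in>V. E y z} = b 0"
proof -
  have "{z\<in>V. E y z} = {z\<in>V. E y z \<and> d y z = d y y + 1}" using gdist_eq_1_iff[OF assms] by auto
  then show ?thesis using card_farther_neighbours[OF assms assms] by simp
qed

lemma card_level_neighbours:
  assumes "x \<in> V" "y \<in> V"
  shows "int (card {z\<in>V. E y z \<and> d x z = d x y}) = a (d x y)"
proof -
  let ?C = "{z\<in>V. E y z \<and> d x z + 1 = d x y}"
  let ?A = "{z\<in>V. E y z \<and> d x z = d x y}"
  let ?B = "{z\<in>V. E y z \<and> d x z = d x y + 1}"
  have "{z\<in>V. E y z} = ?C \<union> ?A \<union> ?B"
    using gdist_adj[OF assms(1), of y] by fastforce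
  moreover have "card (?C \<union> ?A \<union> ?B) = card ?C + card ?A + card ?B"
  proof -
    have "card (?C \<union> ?A) = card ?C + card ?A" by (rule card_Un_disjoint) (use finite_V in auto)
    moreover have "card (?C \<union> ?A \<union> ?B) = card (?C \<union> ?A) + card ?B"
      by (rule card_Un_disjoint) (use finite_V in auto)
    ultimately show ?thesis by simp
  qed
  ultimately have "b 0 = c (d x y) + card ?A + b (d x y)"
    using valency[OF assms(2)] card_closer_neighbours[OF assms] card_farther_neighbours[OF assms]
    by simp
  then show ?thesis unfolding a_num_def by simp
qed

lemma card_neighbours_at_distance:
  assumes "x \<in> V" "w \<in> V"
  shows "int (card {z\<in>V. E w z \<and> d x z = i}) = p1 (d x w) i"
proof -
  consider "i + 1 = d x w" | "i = d x w" | "i = d x w + 1"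
    | "i + 1 \<noteq> d x w" "i \<noteq> d x w" "i \<noteq> d x w + 1" by blast
  then show ?thesis
  proof cases
    case 1
    then have "{z\<in>V. E w z \<and> d x z = i} = {z\<in>V. E w z \<and> d x z + 1 = d x w}" by auto
    then show ?thesis using card_closer_neighbours[OF assms] 1
      unfolding intersection_number_def by simp
  next
    case 2
    then show ?thesis using card_level_neighbours[OF assms] unfolding intersection_number_def by simp
  next
    case 3
    then show ?thesis using card_farther_neighbours[OF assms] unfolding intersection_number_def by simp
  next
    case 4
    then have empty: "{z\<in>V. E w z \<and> d x z = i} = {}" using gdist_adj[OF assms(1), of w] by fastforce
    show ?thesis unfolding empty using 4 by (simp add: intersection_number_def)
  qed
qed

lemma of_nat_card_neighbours_at_distance:
  "x \<in> V \<Longrightarrow> w \<in> V \<Longrightarrow> of_nat (card {z\<in>V. E w z \<and> d x z = i}) = (of_int (p1 (d x w) i) :: 'b::ring_1)"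
  by (simp flip: card_neighbours_at_distance)

lemma c_0: "c 0 = 0"
proof -
  obtain x where "x \<in> V" using V_nonempty by blast
  then show ?thesis using card_closer_neighbours[of x x] by simp
qed

lemma a_0: "a 0 = 0"
  unfolding a_num_def c_0 by simp

lemma b_diameter: "b D = 0"
proof -
  obtain x y where xy: "x \<in> V" "y \<in> V" "d x y = D" by (rule diameter_attained)
  have empty: "{z\<in>V. E y z \<and> d x z = d x y + 1} = {}" using gdist_le_diameter[OF xy(1)] xy(3) by fastforce
  show ?thesis using card_farther_neighbours[OF xy(1,2)] xy(3) unfolding empty by simp
qed

lemma c_1: assumes "1 \<le> D" shows "c 1 = 1"
proof -
  obtain x v where xv: "x \<in> V" "v \<in> V" "d x v = 1" using exists_pair_at_distance assms by metis
  have "{z\<in>V. E v z \<and> d x z + 1 = d x v} = {x}"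
    using xv gdist_eq_0_iff[OF xv(1)] gdist_eq_1_iff[OF xv(1,2)] adj_sym by auto
  then show ?thesis using card_closer_neighbours[OF xv(1,2)] xv(3) by simp
qed

lemma c_pos: assumes "0 < i" "i \<le> D" shows "0 < c i"
proof -
  obtain x v where xv: "x \<in> V" "v \<in> V" "d x v = i" using exists_pair_at_distance assms(2) by metis
  obtain u where "u \<in> V" "E v u" "d x u + 1 = d x v" using closer_neighbour xv assms(1) by metis
  then show ?thesis
    using card_Collect_pos[of u "\<lambda>z. E v z \<and> d x z + 1 = d x v"] card_closer_neighbours[OF xv(1,2)] xv(3)
    by simp
qed

lemma b_pos: assumes "i < D" shows "0 < b i"
proof -
  obtain x y where xy: "x \<in> V" "y \<in> V" "d x y = D" by (rule diameter_attained)
  obtain v where v: "v \<in> V" "d x v = i" "d v y = D - i"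
    using geodesic_vertex[OF xy(1,2), of i] xy(3) assms by auto
  obtain u where u: "u \<in> V" "E v u" "d y u + 1 = d y v"
    using closer_neighbour[OF xy(2) v(1)] v(3) assms gdist_sym by auto
  have "d x u = i + 1"
    using gdist_adj[OF xy(1) u(2)] gdist_triangle[OF xy(1) u(1) xy(2)] v u xy(3) gdist_sym[of u y]
      gdist_sym[of v y] by linarith
  then show ?thesis
    using card_Collect_pos[of u "\<lambda>z. E v z \<and> d x z = d x v + 1"] card_farther_neighbours[OF xy(1) v(1)] u v
    by simp
qed

lemma a_nonneg:
  assumes "i \<le> D" shows "0 \<le> a i"
proof -
  obtain x v where "x \<in> V" "v \<in> V" "d x v = i" using exists_pair_at_distance assms by metis
  then show ?thesis using card_level_neighbours by (metis of_nat_0_le_iff)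
qed

lemma card_sphere_1:
  assumes "x \<in> V" shows "card (sphere x 1) = b 0"
proof -
  have "sphere x 1 = {z\<in>V. E x z}" using gdist_eq_1_iff[OF assms] by auto
  then show ?thesis using valency[OF assms] by simp
qed

lemma card_sphere_Suc: "x \<in> V \<Longrightarrow> card (sphere x (Suc i)) * c (Suc i) = card (sphere x i) * b i"
proof -
  assume x: "x \<in> V"
  have "(\<Sum>z\<in>sphere x i. card {w\<in>V. E z w \<and> d x w = Suc i})
      = (\<Sum>w\<in>sphere x (Suc i). card {z\<in>V. E w z \<and> d x z = i})"
    by (rule sum_card_adj_swap)
  moreover have "(\<Sum>z\<in>sphere x i. card {w\<in>V. E z w \<and> d x w = Suc i}) = (\<Sum>z\<in>sphere x i. b i)"
    using card_farther_neighbours[OF x] by (intro sum.cong) auto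
  moreover have "(\<Sum>w\<in>sphere x (Suc i). card {z\<in>V. E w z \<and> d x z = i}) = (\<Sum>w\<in>sphere x (Suc i). c (Suc i))"
  proof (intro sum.cong refl)
    fix w assume "w \<in> sphere x (Suc i)"
    then have "{z\<in>V. E w z \<and> d x z = i} = {z\<in>V. E w z \<and> d x z + 1 = d x w}" by auto
    then show "card {z\<in>V. E w z \<and> d x z = i} = c (Suc i)"
      using card_closer_neighbours[OF x, of w] \<open>w \<in> sphere x (Suc i)\<close> by simp
  qed
  ultimately show ?thesis by (simp add: mult.commute)
qed

lemma sum_by_distance:
  assumes "S \<subseteq> V" "x \<in> V"
  shows "(\<Sum>w\<in>S. F w) = (\<Sum>j\<le>D. \<Sum>w\<in>{w\<in>S. d x w = j}. F w)"
proof -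
  have "d x ` S \<subseteq> {..D}" using gdist_le_diameter assms by auto
  then show ?thesis
    using sum.group[of S "{..D}" "d x" F] finite_subset[OF assms(1) finite_V] by (simp add: eq_commute)
qed

lemma sum_neighbours_by_distance:
  fixes g :: "nat \<Rightarrow> 'b::comm_ring_1"
  assumes "x \<in> V" "z \<in> V"
  shows "(\<Sum>w\<in>{w\<in>V. E z w}. g (d x w)) = (\<Sum>i\<le>D. g i * of_int (p1 (d x z) i))"
proof -
  have "(\<Sum>w\<in>{w\<in>V. E z w}. g (d x w)) = (\<Sum>i\<le>D. \<Sum>w\<in>{w\<in>{w\<in>V. E z w}. d x w = i}. g (d x w))"
    by (rule sum_by_distance) (use assms(1) in auto)
  also have "\<dots> = (\<Sum>i\<le>D. of_nat (card {w\<in>V. E z w \<and> d x w = i}) * g i)"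
    by (intro sum.cong) auto
  also have "\<dots> = (\<Sum>i\<le>D. g i * of_int (p1 (d x z) i))"
  proof (intro sum.cong refl)
    fix i
    show "of_nat (card {w\<in>V. E z w \<and> d x w = i}) * g i = g i * of_int (p1 (d x z) i)"
      using of_nat_card_neighbours_at_distance[OF assms, of i] by (metis mult.commute)
  qed
  finally show ?thesis .
qed

lemma sum_sphere_by_distance:
  fixes g :: "nat \<Rightarrow> 'b::comm_semiring_1"
  assumes "x \<in> V" "y \<in> V"
  shows "(\<Sum>w\<in>sphere x j. g (d y w)) = (\<Sum>l\<le>D. g l * of_nat (p_num V E x y j l))"
proof -
  have "(\<Sum>w\<in>sphere x j. g (d y w)) = (\<Sum>l\<le>D. \<Sum>w\<in>{w\<in>sphere x j. d y w = l}. g (d y w))"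
    by (rule sum_by_distance) (use assms(2) in auto)
  also have "\<dots> = (\<Sum>l\<le>D. g l * of_nat (p_num V E x y j l))"
    unfolding p_num_def by (intro sum.cong) (auto simp: mult.commute)
  finally show ?thesis .
qed

lemma p_num_0:
  assumes "y \<in> V" shows "p_num V E x y j 0 = (if d x y = j then 1 else 0)"
proof -
  have "{z\<in>V. d x z = j \<and> d y z = 0} = (if d x y = j then {y} else {})"
    using gdist_eq_0_iff[OF assms] assms by auto
  then show ?thesis unfolding p_num_def by simp
qed

lemma p_num_1:
  assumes "x \<in> V" "y \<in> V"
  shows "int (p_num V E x y j 1) = p1 (d x y) j"
proof -
  have "{z\<in>V. d x z = j \<and> d y z = 1} = {z\<in>V. E y z \<and> d x z = j}"
    using gdist_eq_1_iff[OF assms(2)] by auto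
  then show ?thesis unfolding p_num_def using card_neighbours_at_distance[OF assms] by simp
qed

lemma p_num_swap: "p_num V E y x j l = p_num V E x y l j"
  unfolding p_num_def by (simp add: conj_commute)

lemma eigenvector_sphere_sums:
  fixes f :: "'a \<Rightarrow> real"
  assumes eig: "\<And>z. z \<in> V \<Longrightarrow> (\<Sum>y\<in>{y\<in>V. E z y}. f y) = \<theta> * f z" and x: "x \<in> V"
  shows "\<theta> * (\<Sum>z\<in>sphere x i. f z) = (\<Sum>j\<le>D. of_int (p1 j i) * (\<Sum>z\<in>sphere x j. f z))"
proof -
  have "\<theta> * (\<Sum>z\<in>sphere x i. f z) = (\<Sum>z\<in>sphere x i. \<Sum>y\<in>{y\<in>V. E z y}. f y)"
    using eig by (simp add: sum_distrib_left)
  also have "\<dots> = (\<Sum>z\<in>sphere x i. \<Sum>y\<in>V. if E z y then f y else 0)"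
    using finite_V by (simp add: sum.inter_filter)
  also have "\<dots> = (\<Sum>y\<in>V. \<Sum>z\<in>sphere x i. if E z y then f y else 0)"
    by (rule sum.swap)
  also have "\<dots> = (\<Sum>y\<in>V. f y * of_nat (card {z\<in>V. E y z \<and> d x z = i}))"
  proof (rule sum.cong)
    fix y
    have "{z\<in>sphere x i. E z y} = {z\<in>V. E y z \<and> d x z = i}" using adj_sym by blast
    then show "(\<Sum>z\<in>sphere x i. if E z y then f y else 0) = f y * of_nat (card {z\<in>V. E y z \<and> d x z = i})"
      using finite_V by (simp add: sum.inter_filter[symmetric])
  qed simp
  also have "\<dots> = (\<Sum>y\<in>V. f y * of_int (p1 (d x y) i))"
    using of_nat_card_neighbours_at_distance[OF x] by (intro sum.cong) auto
  also have "\<dots> = (\<Sum>j\<le>D. \<Sum>y\<in>sphere x j. f y * of_int (p1 (d x y) i))"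
    by (rule sum_by_distance) (use x in auto)
  also have "\<dots> = (\<Sum>j\<le>D. of_int (p1 j i) * (\<Sum>z\<in>sphere x j. f z))"
    by (intro sum.cong) (auto simp: sum_distrib_left mult.commute)
  finally show ?thesis .
qed

lemma distance_function_eigenvector:
  fixes w :: "nat \<Rightarrow> real"
  assumes "\<And>j. j \<le> D \<Longrightarrow> (\<Sum>i\<le>D. w i * of_int (p1 j i)) = \<theta> * w j" and "w 0 \<noteq> 0"
  shows "is_eigenvalue V E \<theta>"
proof -
  obtain x where x: "x \<in> V" using V_nonempty by blast
  have "(\<Sum>y\<in>{y\<in>V. E z y}. w (d x y)) = \<theta> * w (d x z)" if "z \<in> V" for z
    using sum_neighbours_by_distance[OF x that, of w] assms(1) gdist_le_diameter[OF x that] by simp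
  moreover have "\<exists>y\<in>V. w (d x y) \<noteq> 0" using x assms(2) by (intro bexI[of _ x]) simp_all
  ultimately show ?thesis unfolding is_eigenvalue_def by (intro exI[of _ "\<lambda>z. w (d x z)"]) simp
qed

lemma valency_is_eigenvalue: "is_eigenvalue V E (real (b 0))"
  unfolding is_eigenvalue_def using valency V_nonempty by (intro exI[of _ "\<lambda>_. 1"]) auto

end

section \<open>Diameter three\<close>

locale distance_regular_graph_3 = distance_regular_graph V E 3 b c
  for V :: "'a set" and E :: "'a \<Rightarrow> 'a \<Rightarrow> bool" and b c :: "nat \<Rightarrow> nat"
begin

lemma intersection_parameters: "c 0 = 0" "c 1 = 1" "b 3 = 0" "a 0 = 0"
  "0 < b 0" "0 < b 1" "0 < b 2" "0 < c 2" "0 < c 3"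
  using c_0 c_1 b_diameter a_0 b_pos c_pos by auto

text \<open>\<open>det (t I - L)\<close> for the tridiagonal matrix \<open>L = (p\<^sup>j\<^sub>1\<^sub>i)\<close>, by the three-term recurrence
  for its leading principal minors.\<close>

definition char_poly :: "real poly" where
  "char_poly = [:- of_int (a 3), 1:] *
      ([:- of_int (a 2), 1:] * [:- real (b 0), - of_int (a 1), 1:] - [:0, real (b 1 * c 2):])
    - smult (real (b 2 * c 3)) [:- real (b 0), - of_int (a 1), 1:]"

lemma poly_char_poly: "poly char_poly t =
    (t - of_int (a 3)) * ((t - of_int (a 2)) * (t\<^sup>2 - of_int (a 1) * t - real (b 0)) - real (b 1 * c 2) * t)
    - real (b 2 * c 3) * (t\<^sup>2 - of_int (a 1) * t - real (b 0))"
  by (simp add: char_poly_def algebra_simps power2_eq_square)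

lemma eigenvalue_root:
  assumes "is_eigenvalue V E \<theta>"
  shows "poly char_poly \<theta> = 0"
proof -
  obtain f x where x: "x \<in> V" "f x \<noteq> 0"
    and eig: "\<And>z. z \<in> V \<Longrightarrow> (\<Sum>y\<in>{y\<in>V. E z y}. f y) = \<theta> * f z"
    using assms unfolding is_eigenvalue_def by blast
  define u where "u i = (\<Sum>z\<in>sphere x i. f z)" for i
  have rec: "\<theta> * u i = (\<Sum>j\<le>3. of_int (p1 j i) * u j)" for i
    unfolding u_def by (rule eigenvector_sphere_sums[OF eig x(1)])
  have e0: "\<theta> * u 0 = u 1"
    using rec[of 0] intersection_parameters by (simp add: sum_atMost_3 intersection_number_def)
  have e1: "\<theta> * u 1 = real (b 0) * u 0 + of_int (a 1) * u 1 + real (c 2) * u 2"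
    using rec[of 1] by (simp add: sum_atMost_3 intersection_number_def)
  have e2: "(\<theta> - of_int (a 2)) * u 2 - real (b 1) * u 1 = real (c 3) * u 3"
    using rec[of 2] by (simp add: sum_atMost_3 intersection_number_def algebra_simps)
  have e3: "(\<theta> - of_int (a 3)) * u 3 - real (b 2) * u 2 = 0"
    using rec[of 3] by (simp add: sum_atMost_3 intersection_number_def algebra_simps)
  have "sphere x 0 = {x}" using gdist_eq_0_iff[OF x(1)] x(1) by auto
  then have "u 0 \<noteq> 0" using x(2) unfolding u_def by simp
  have q: "(\<theta>\<^sup>2 - of_int (a 1) * \<theta> - real (b 0)) * u 0 = real (c 2) * u 2"
    using e0 e1 by (simp add: power2_eq_square algebra_simps)
  have "poly char_poly \<theta> * u 0
      = (\<theta> - of_int (a 3)) * ((\<theta> - of_int (a 2)) * ((\<theta>\<^sup>2 - of_int (a 1) * \<theta> - real (b 0)) * u 0)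
          - real (b 1 * c 2) * (\<theta> * u 0))
        - real (b 2 * c 3) * ((\<theta>\<^sup>2 - of_int (a 1) * \<theta> - real (b 0)) * u 0)"
    unfolding poly_char_poly by (simp add: algebra_simps)
  also have "\<dots> = (\<theta> - of_int (a 3)) * ((\<theta> - of_int (a 2)) * (real (c 2) * u 2) - real (b 1 * c 2) * u 1)
        - real (b 2 * c 3) * (real (c 2) * u 2)"
    unfolding q e0 ..
  also have "\<dots> = real (c 2) * ((\<theta> - of_int (a 3)) * ((\<theta> - of_int (a 2)) * u 2 - real (b 1) * u 1)
        - real (b 2) * (real (c 3) * u 2))"
    by (simp add: algebra_simps)
  also have "\<dots> = real (c 2) * real (c 3) * ((\<theta> - of_int (a 3)) * u 3 - real (b 2) * u 2)"
    unfolding e2 by (simp add: algebra_simps)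
  also have "\<dots> = 0" unfolding e3 by simp
  finally show ?thesis using \<open>u 0 \<noteq> 0\<close> by simp
qed

lemma root_eigenvalue:
  assumes "poly char_poly \<theta> = 0"
  shows "is_eigenvalue V E \<theta>"
proof -
  define Q where "Q = \<theta>\<^sup>2 - of_int (a 1) * \<theta> - real (b 0)"
  \<comment> \<open>the standard sequence of \<open>\<theta>\<close>, scaled by \<open>b\<^sub>0 b\<^sub>1 b\<^sub>2\<close> to avoid division\<close>
  define w where "w i = (if i = 0 then real (b 0 * b 1 * b 2) else if i = 1 then \<theta> * real (b 1 * b 2)
    else if i = 2 then real (b 2) * Q else (\<theta> - of_int (a 2)) * Q - real (b 1 * c 2) * \<theta>)" for i :: nat
  show ?thesis
  proof (rule distance_function_eigenvector[of w])
  show "w 0 \<noteq> 0" using intersection_parameters unfolding w_def by simp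
  fix j :: nat assume "j \<le> 3"
  then consider "j = 0" | "j = 1" | "j = 2" | "j = 3" by linarith
  then show "(\<Sum>i\<le>3. w i * of_int (p1 j i)) = \<theta> * w j"
  proof cases
    case 4
    have "w 2 * real (c 3) + w 3 * of_int (a 3) - \<theta> * w 3 = - poly char_poly \<theta>"
      unfolding w_def Q_def poly_char_poly by (simp add: algebra_simps)
    then show ?thesis using 4 assms by (simp add: sum_atMost_3 intersection_number_def)
  qed (use intersection_parameters in \<open>simp_all add: sum_atMost_3 intersection_number_def w_def Q_def
      power2_eq_square algebra_simps\<close>)
  qed
qed

lemma char_poly_eventually_pos: "eventually (\<lambda>t. 0 < poly char_poly t) at_bot"
  unfolding poly_char_poly by (rule quartic_eventually_pos)

lemma char_poly_negative_root:
  obtains r where "r < 0" "poly char_poly r = 0"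
proof -
  let ?q = "[:- real (b 0), - of_int (a 1), 1:]"
  have q: "poly ?q t = t\<^sup>2 - of_int (a 1) * t - real (b 0)" for t
    by (simp add: algebra_simps power2_eq_square)
  have "eventually (\<lambda>t. 0 < poly ?q t) at_bot" unfolding q by (rule quadratic_eventually_pos)
  moreover have "poly ?q 0 < 0" using intersection_parameters by simp
  ultimately obtain t0 where t0: "t0 < 0" "poly ?q t0 = 0" by (rule poly_root_below)
  have "poly char_poly t0 = - real (b 1 * c 2) * ((t0 - of_int (a 3)) * t0)"
    using t0(2) unfolding poly_char_poly q by (simp add: algebra_simps)
  moreover have "0 < (t0 - of_int (a 3)) * t0" using t0(1) a_nonneg[of 3] by (intro mult_neg_neg) auto
  ultimately have "poly char_poly t0 < 0" using intersection_parameters by simp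
  then obtain r where "r < t0" "poly char_poly r = 0"
    using char_poly_eventually_pos poly_root_below by blast
  then show ?thesis using t0(1) by (intro that[of r]) auto
qed

lemma finite_eigenvalues: "finite (eigenvalues V E)"
proof -
  have "char_poly \<noteq> 0"
    using char_poly_eventually_pos by (intro notI) (auto simp: eventually_at_bot_linorder)
  then have "finite {t. poly char_poly t = 0}" by (rule poly_roots_finite)
  then show ?thesis unfolding eigenvalues_def by (rule finite_subset[rotated]) (auto dest: eigenvalue_root)
qed

lemma valency_if_second_eigenvalue_a3:
  assumes "second_eigenvalue V E = of_int (a 3)"
  shows "int (b 0) = (a 3 - a 1) * a 3"
proof -
  \<comment> \<open>a negative root and the valency are two distinct eigenvalues, so \<open>\<theta>\<^sub>1\<close> is one of them\<close>
  obtain r where r: "r < 0" "poly char_poly r = 0" by (rule char_poly_negative_root)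
  have "r \<noteq> real (b 0)" using r(1) by simp
  then have "of_int (a 3) \<in> eigenvalues V E"
    using Max_remove_Max_in[OF finite_eigenvalues, of r "real (b 0)"] root_eigenvalue[OF r(2)]
      valency_is_eigenvalue assms
    unfolding second_eigenvalue_def eigenvalues_def by simp
  then have "poly char_poly (of_int (a 3)) = 0" using eigenvalue_root unfolding eigenvalues_def by simp
  then have "real (b 2 * c 3) * real_of_int (a 3 * a 3 - a 1 * a 3 - int (b 0)) = 0"
    unfolding poly_char_poly by (simp add: power2_eq_square)
  then have "real_of_int (a 3 * a 3 - a 1 * a 3 - int (b 0)) = 0"
    using intersection_parameters by simp
  then have "a 3 * a 3 - a 1 * a 3 - int (b 0) = 0" by (simp only: of_int_eq_0_iff)
  then show ?thesis by (simp add: algebra_simps)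
qed

lemma c2_card_sphere_2: "x \<in> V \<Longrightarrow> c 2 * card (sphere x 2) = b 0 * b 1"
  using card_sphere_Suc[of x 1] card_sphere_1[of x] by (simp add: numeral_2_eq_2 mult.commute)

lemma c3_card_sphere_3: "x \<in> V \<Longrightarrow> c 3 * card (sphere x 3) = card (sphere x 2) * b 2"
  using card_sphere_Suc[of x 2] by (simp add: numeral_3_eq_3 numeral_2_eq_2 mult.commute)

context
  fixes x y assumes x: "x \<in> V" and y: "y \<in> V" and xy: "d x y = 3"
begin

lemma c2_p22: "int (c 2) * int (p_num V E x y 2 2) = int (c 3) * (a 2 + a 3 - a 1)"
proof -
  have "int (\<Sum>z\<in>{z\<in>V. E y z}. card {w\<in>V. E z w \<and> d x w = 2})
      = (\<Sum>z\<in>{z\<in>V. E y z}. p1 (d x z) 2)"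
    unfolding of_nat_sum using card_neighbours_at_distance[OF x] by (intro sum.cong) auto
  also have "\<dots> = (\<Sum>i\<le>3. p1 i 2 * p1 3 i)"
    using sum_neighbours_by_distance[OF x y, of "\<lambda>i. p1 i 2"] xy by simp
  also have "\<dots> = int (c 3) * (a 2 + a 3)"
    by (simp add: sum_atMost_3 intersection_number_def algebra_simps)
  finally have around_y: "int (\<Sum>z\<in>{z\<in>V. E y z}. card {w\<in>V. E z w \<and> d x w = 2}) = int (c 3) * (a 2 + a 3)" .
  have "int (\<Sum>w\<in>sphere x 2. card {z\<in>V. E w z \<and> E y z}) = (\<Sum>w\<in>sphere x 2. p1 (d y w) 1)"
    unfolding of_nat_sum
  proof (intro sum.cong refl)
    fix w assume "w \<in> sphere x 2"
    then have "w \<in> V" by simp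
    then have "{z\<in>V. E w z \<and> E y z} = {z\<in>V. E w z \<and> d y z = 1}" using gdist_eq_1_iff[OF y] by auto
    then show "int (card {z\<in>V. E w z \<and> E y z}) = p1 (d y w) 1"
      using card_neighbours_at_distance[OF y \<open>w \<in> V\<close>] by simp
  qed
  also have "\<dots> = (\<Sum>l\<le>3. p1 l 1 * int (p_num V E x y 2 l))"
    by (rule sum_sphere_by_distance[OF x y])
  also have "\<dots> = int (c 3) * a 1 + int (c 2) * int (p_num V E x y 2 2)"
    using p_num_0[OF y, of x 2] p_num_1[OF x y, of 2] xy
    by (simp add: sum_atMost_3 intersection_number_def)
  finally have around_sphere: "int (\<Sum>w\<in>sphere x 2. card {z\<in>V. E w z \<and> E y z})
      = int (c 3) * a 1 + int (c 2) * int (p_num V E x y 2 2)" .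
  show ?thesis
    using around_y around_sphere sum_card_adj_swap[of "E y" "\<lambda>w. d x w = 2"]
    by (simp add: algebra_simps)
qed

lemma card_sphere_3_split:
  "int (card (sphere x 3)) = 1 + a 3 + int (p_num V E x y 3 2) + int (p_num V E x y 3 3)"
  using sum_sphere_by_distance[OF x y, of "\<lambda>_. 1 :: int" 3] p_num_0[OF y, of x 3] p_num_1[OF x y, of 3] xy
  by (simp add: sum_atMost_3 intersection_number_def)

lemma card_sphere_2_split:
  "int (card (sphere y 2)) = int (c 3) + int (p_num V E x y 2 2) + int (p_num V E x y 3 2)"
  using sum_sphere_by_distance[OF y x, of "\<lambda>_. 1 :: int" 2] p_num_0[OF x, of y 2] p_num_1[OF y x, of 2]
    xy gdist_sym[of x y]
  by (simp add: sum_atMost_3 intersection_number_def p_num_swap[of y x])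

end

end

section \<open>Shilla graphs\<close>

locale shilla_graph =
  fixes V :: "'a set" and E :: "'a \<Rightarrow> 'a \<Rightarrow> bool" and b c :: "nat \<Rightarrow> nat"
  assumes shilla: "shilla V E b c"

sublocale shilla_graph \<subseteq> distance_regular_graph_3
  using shilla by unfold_locales (simp add: shilla_def)

context shilla_graph
begin

abbreviation shilla_b :: int where "shilla_b \<equiv> a 3 - a 1"

lemma valency_eq: "int (b 0) = shilla_b * a 3"
  using valency_if_second_eigenvalue_a3 shilla unfolding shilla_def by simp

lemma c3_eq: "int (c 3) = (shilla_b - 1) * a 3"
  using valency_eq intersection_parameters unfolding a_num_def by (simp add: algebra_simps)

lemma b1_eq: "int (b 1) = (shilla_b - 1) * (a 3 + 1)"
  using valency_eq intersection_parameters unfolding a_num_def by (simp add: algebra_simps)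

lemma a2_eq: "a 2 = shilla_b * a 3 - int (b 2) - int (c 2)"
  using valency_eq unfolding a_num_def by simp

lemma c2_k2:
  assumes "x \<in> V" shows "int (c 2) * int (card (sphere x 2)) = (shilla_b - 1) * shilla_b * a 3 * (a 3 + 1)"
proof -
  have "int (c 2) * int (card (sphere x 2)) = int (b 0) * int (b 1)"
    using arg_cong[OF c2_card_sphere_2[OF assms], of int] by simp
  then show ?thesis unfolding valency_eq b1_eq by (simp add: algebra_simps)
qed

lemma c2_k3:
  assumes "x \<in> V" shows "int (c 2) * int (card (sphere x 3)) = shilla_b * (a 3 + 1) * int (b 2)"
proof -
  have "int (c 3) * (int (c 2) * int (card (sphere x 3))) = int (c 2) * int (card (sphere x 2)) * int (b 2)"
    using arg_cong[OF c3_card_sphere_3[OF assms], of int] by (simp add: algebra_simps)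
  also have "\<dots> = int (c 3) * (shilla_b * (a 3 + 1) * int (b 2))"
    unfolding c2_k2[OF assms] c3_eq by (simp add: algebra_simps)
  finally show ?thesis using intersection_parameters by simp
qed

context
  fixes x y assumes x: "x \<in> V" and y: "y \<in> V" and xy: "d x y = 3"
begin

lemma c2_p32: "int (c 2) * int (p_num V E x y 3 2) = (shilla_b - 1) * a 3 * int (b 2)"
proof -
  have "int (c 2) * int (p_num V E x y 3 2)
      = int (c 2) * int (card (sphere y 2)) - int (c 2) * int (c 3) - int (c 2) * int (p_num V E x y 2 2)"
    using card_sphere_2_split[OF x y xy] by (simp add: algebra_simps)
  also have "\<dots> = (shilla_b - 1) * shilla_b * a 3 * (a 3 + 1) - int (c 2) * ((shilla_b - 1) * a 3)
      - (shilla_b - 1) * a 3 * (a 2 + a 3 - a 1)"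
    unfolding c2_k2[OF y] c2_p22[OF x y xy] c3_eq by simp
  also have "\<dots> = (shilla_b - 1) * a 3 * int (b 2)"
    unfolding a2_eq by (simp add: algebra_simps)
  finally show ?thesis .
qed

lemma c2_p33: "int (c 2) * (int (p_num V E x y 3 3) + 1 + a 3) = (shilla_b + a 3) * int (b 2)"
proof -
  have "int (c 2) * (int (p_num V E x y 3 3) + 1 + a 3)
      = int (c 2) * int (card (sphere x 3)) - int (c 2) * int (p_num V E x y 3 2)"
    using card_sphere_3_split[OF x y xy] by (simp add: algebra_simps)
  also have "\<dots> = (shilla_b + a 3) * int (b 2)"
    unfolding c2_k3[OF x] c2_p32 by (simp add: algebra_simps)
  finally show ?thesis .
qed

end

end

theorem lemma10:
  fixes V :: "'a set" and E :: "'a \<Rightarrow> 'a \<Rightarrow> bool" and b c :: "nat \<Rightarrow> nat" and bG :: int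
  assumes "shilla V E b c"
    and "bG = a_num b c 3 - a_num b c 1"
  shows "int (c 2) dvd (bG - 1) * a_num b c 3 * int (b 2) \<and>
    int (c 2) dvd (bG - 1) * bG * a_num b c 3 * (a_num b c 3 + 1) \<and>
    int (c 2) dvd bG * (a_num b c 3 + 1) * int (b 2) \<and>
    int (c 2) dvd (bG + a_num b c 3) * int (b 2) \<and>
    (bG + a_num b c 3) * int (b 2) \<ge> (1 + a_num b c 3) * int (c 2) \<and>
    (\<forall>x\<in>V. \<forall>y\<in>V. gdist E x y = 3 \<longrightarrow>
       ((bG + a_num b c 3) * int (b 2) = (1 + a_num b c 3) * int (c 2)
        \<longleftrightarrow> p_num V E x y 3 3 = 0)) \<and>
    int (c 2) dvd (bG - 1) * bG * int (b 2)"
proof -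
  interpret shilla_graph V E b c by (rule shilla_graph.intro) (rule assms(1))
  obtain x y where xy: "x \<in> V" "y \<in> V" "gdist E x y = 3" by (rule diameter_attained)
  have c2: "0 < int (c 2)" using intersection_parameters by simp
  have dvd_i: "int (c 2) dvd (bG - 1) * a 3 * int (b 2)"
    unfolding assms(2) by (rule dvdI[OF c2_p32[OF xy, symmetric]])
  have dvd_ii: "int (c 2) dvd (bG - 1) * bG * a 3 * (a 3 + 1)"
    unfolding assms(2) by (rule dvdI[OF c2_k2[OF xy(1), symmetric]])
  have dvd_iii: "int (c 2) dvd bG * (a 3 + 1) * int (b 2)"
    unfolding assms(2) by (rule dvdI[OF c2_k3[OF xy(1), symmetric]])
  have dvd_iv: "int (c 2) dvd (bG + a 3) * int (b 2)"
    unfolding assms(2) by (rule dvdI[OF c2_p33[OF xy, symmetric]])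
  have "(bG - 1) * bG * int (b 2) = (bG - 1) * ((bG + a 3) * int (b 2)) - (bG - 1) * a 3 * int (b 2)"
    by (simp add: algebra_simps)
  then have dvd_v: "int (c 2) dvd (bG - 1) * bG * int (b 2)"
    using dvd_i dvd_iv by (simp add: dvd_diff)
  have "0 \<le> int (c 2) * int (p_num V E x y 3 3)" by simp
  then have bound: "(1 + a 3) * int (c 2) \<le> (bG + a 3) * int (b 2)"
    unfolding assms(2) c2_p33[OF xy, symmetric] by (simp add: algebra_simps)
  have p33_iff: "(bG + a 3) * int (b 2) = (1 + a 3) * int (c 2) \<longleftrightarrow> p_num V E x' y' 3 3 = 0"
    if "x' \<in> V" "y' \<in> V" "gdist E x' y' = 3" for x' y'
    unfolding assms(2) c2_p33[OF that, symmetric] using c2 by (simp add: algebra_simps)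
  show ?thesis using dvd_i dvd_ii dvd_iii dvd_iv bound p33_iff dvd_v by blast
qed

end
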